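(* For every integer $n\ge 3$ and every $x>0$: (1) $$\left(\sum_{k=0}^{\infty}\frac{k+1}{(x+k)^{n+1}}\right)^2<\left(\sum_{k=0}^{\infty}\frac{k+1}{(x+k)^{n}}\right)\left(\sum_{k=0}^{\infty}\frac{k+1}{(x+k)^{n+2}}\right);$$ (2) $$\left(\sum_{k=0}^{\infty}\frac{k+1}{(x+k)^{n+1}}\right)^2>\frac{n^2-n-2}{n^2-n}\left(\sum_{k=0}^{\infty}\frac{k+1}{(x+k)^{n}}\right)\left(\sum_{k=0}^{\infty}\frac{k+1}{(x+k)^{n+2}}\right).$$ *)

theory Defs
  imports "HOL-Analysis.Analysis"
begin

end

theory Submission
  imports Defs "HOL-Probability.Distributions"
begin

(*
  Since (x + k)^-(j+1) = 1/j! * integral of t^j exp (-(x + k) t) over t > 0, the numbers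
  j! wzeta x (j + 1) and j! wzeta x j are the j-th moments of expsum0 x t and expsum1 x t,
  the sums of (k + 1) exp (-(x + k) t) and (k + 1) (x + k) exp (-(x + k) t).
  The upper bound is the strict Cauchy-Schwarz inequality for the weights (k + 1) / (x + k)^n.
  For the lower bound, phi is strictly increasing (because 2 sinh (t / 2) > t), so the integral
  of (t - tau) t^n expsum0 x t (phi t - phi tau) is positive for every tau > 0.  Expanded in
  moments it is a linear combination of wzeta x n, wzeta x (n + 1), wzeta x (n + 2), and
  choosing tau = (n + 1) wzeta x (n + 2) / wzeta x (n + 1) removes phi tau from it.
*)

lemma sinh_real_gt:
  fixes x :: real
  assumes "0 < x"
  shows "x < sinh x"
proof -
  have "sinh 0 - 0 < sinh x - x"
  proof (rule DERIV_pos_imp_increasing_open[OF assms])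
    fix v :: real
    assume "0 < v"
    have "cosh v - 1 = 2 * sinh (v / 2) ^ 2"
      using cosh_double[of "v / 2"] cosh_square_eq[of "v / 2"] by simp
    also have "\<dots> > 0"
      using \<open>0 < v\<close> by simp
    finally have "cosh v - 1 > 0" .
    moreover have "((\<lambda>v. sinh v - v) has_real_derivative cosh v - 1) (at v)"
      by (auto intro!: derivative_eq_intros)
    ultimately show "\<exists>y. ((\<lambda>v. sinh v - v) has_real_derivative y) (at v) \<and> 0 < y"
      by blast
  qed (intro continuous_intros)
  then show ?thesis
    by simp
qed

lemma geometric_deriv2_sums:
  fixes z :: "'a :: {real_normed_field,banach}"
  assumes "norm z < 1"
  shows "(\<lambda>n. of_nat (Suc n) * of_nat (Suc (Suc n)) * z ^ n) sums (2 / (1 - z) ^ 3)"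
proof -
  have "(\<lambda>n. diffs (\<lambda>n. of_nat (Suc n)) n * z ^ n) sums (2 / (1 - z) ^ 3)"
  proof (rule termdiffs_sums_strong)
    fix z :: 'a assume "norm z < 1"
    then show "(\<lambda>n. of_nat (Suc n) * z ^ n) sums (1 / (1 - z) ^ 2)"
      by (rule geometric_deriv_sums)
  next
    have "1 - z \<noteq> 0"
      using assms by auto
    have "2 * w / (w ^ 2) ^ 2 = 2 / w ^ 3" if "w \<noteq> 0" for w :: 'a
      using that by (simp add: field_simps eval_nat_numeral)
    then have "2 * (1 - z) / ((1 - z) ^ 2) ^ 2 = 2 / (1 - z) ^ 3"
      using \<open>1 - z \<noteq> 0\<close> .
    with \<open>1 - z \<noteq> 0\<close>
    show "((\<lambda>z. 1 / (1 - z) ^ 2) has_field_derivative 2 / (1 - z) ^ 3) (at z)"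
      by (auto intro!: derivative_eq_intros)
  qed (use assms in auto)
  then show ?thesis
    by (simp add: diffs_def mult_ac)
qed

definition phi :: "real \<Rightarrow> real" where
  "phi t = 1 / (1 - exp (-t)) - 1 / t"

lemma one_minus_exp_neg_eq_sinh:
  fixes t :: real
  shows "(1 - exp (-t)) ^ 2 = exp (-t) * (2 * sinh (t / 2)) ^ 2"
proof -
  have "2 * sinh (t / 2) = exp (t / 2) - exp (- (t / 2))"
    by (simp add: sinh_field_def)
  then have "exp (-t) * (2 * sinh (t / 2)) ^ 2 = exp (-t) * (exp (t / 2) - exp (- (t / 2))) ^ 2"
    by simp
  also have "\<dots> = (exp (-t / 2) * exp (t / 2) - exp (-t / 2) * exp (- (t / 2))) ^ 2"
    by (simp add: power2_eq_square field_simps flip: exp_add)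
  also have "\<dots> = (1 - exp (-t)) ^ 2"
    by (simp flip: exp_add)
  finally show ?thesis ..
qed

lemma phi_less:
  assumes "0 < s" "s < t"
  shows "phi s < phi t"
proof (rule DERIV_pos_imp_increasing[OF \<open>s < t\<close>])
  fix v
  assume "s \<le> v" "v \<le> t"
  with assms have "0 < v"
    by linarith
  then have "0 < 1 - exp (-v)"
    by simp
  have "v ^ 2 * exp (-v) < (2 * sinh (v / 2)) ^ 2 * exp (-v)"
    using sinh_real_gt[of "v / 2"] \<open>0 < v\<close> by (intro mult_strict_right_mono power_strict_mono) auto
  then have "v ^ 2 * exp (-v) < (1 - exp (-v)) ^ 2"
    by (simp add: one_minus_exp_neg_eq_sinh mult.commute)
  then have "0 < - exp (-v) / (1 - exp (-v)) ^ 2 + 1 / v ^ 2"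
    using \<open>0 < v\<close> \<open>0 < 1 - exp (-v)\<close> by (simp add: field_simps)
  moreover have "(phi has_real_derivative - exp (-v) / (1 - exp (-v)) ^ 2 + 1 / v ^ 2) (at v)"
    unfolding phi_def[abs_def] using \<open>0 < v\<close> \<open>0 < 1 - exp (-v)\<close>
    by (auto intro!: derivative_eq_intros simp: power2_eq_square field_simps)
  ultimately show "\<exists>y. (phi has_real_derivative y) (at v) \<and> 0 < y"
    by blast
qed

definition expsum0 :: "real \<Rightarrow> real \<Rightarrow> real" where
  "expsum0 x t = exp (-x * t) / (1 - exp (-t)) ^ 2"

definition expsum1 :: "real \<Rightarrow> real \<Rightarrow> real" where
  "expsum1 x t = expsum0 x t * (2 / (1 - exp (-t)) + x - 2)"

lemma exp_shift_power: "exp (-(x + real k) * t) = exp (-x * t) * exp (-t) ^ k"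
  by (simp add: algebra_simps flip: exp_of_nat_mult exp_add)

lemma expsum0_sums:
  assumes "0 < t"
  shows "(\<lambda>k. (real k + 1) * exp (-(x + real k) * t)) sums expsum0 x t"
proof -
  have "norm (exp (-t)) < 1"
    using assms by simp
  then have "(\<lambda>k. exp (-x * t) * (of_nat (Suc k) * exp (-t) ^ k)) sums (exp (-x * t) * (1 / (1 - exp (-t)) ^ 2))"
    by (intro sums_mult geometric_deriv_sums)
  then show ?thesis
    unfolding exp_shift_power by (simp add: expsum0_def ac_simps)
qed

lemma expsum1_sums:
  assumes "0 < t"
  shows "(\<lambda>k. (real k + 1) * (x + real k) * exp (-(x + real k) * t)) sums expsum1 x t"
proof -
  define z where "z = exp (-t)"
  have "norm z < 1" "1 - z \<noteq> 0"
    using assms by (simp_all add: z_def)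
  have field_eq: "e * (2 / w ^ 3 + (x - 2) * (1 / w ^ 2)) = e / w ^ 2 * (2 / w + x - 2)"
    if "w \<noteq> 0" for e w :: real
    using that by (simp add: field_simps eval_nat_numeral)
  have "(\<lambda>k. exp (-x * t) * (of_nat (Suc k) * of_nat (Suc (Suc k)) * z ^ k + (x - 2) * (of_nat (Suc k) * z ^ k)))
      sums (exp (-x * t) * (2 / (1 - z) ^ 3 + (x - 2) * (1 / (1 - z) ^ 2)))"
    using \<open>norm z < 1\<close> by (intro sums_mult sums_add geometric_deriv2_sums geometric_deriv_sums)
  also have "exp (-x * t) * (2 / (1 - z) ^ 3 + (x - 2) * (1 / (1 - z) ^ 2)) = expsum1 x t"
    using field_eq[OF \<open>1 - z \<noteq> 0\<close>] by (simp add: expsum1_def expsum0_def z_def)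
  finally show ?thesis
    unfolding exp_shift_power z_def by (simp add: algebra_simps)
qed

lemma has_bochner_integral_power_times_exp:
  fixes a :: real
  assumes "0 < a"
  shows "has_bochner_integral lborel (\<lambda>t. if 0 < t then t ^ j * exp (-a * t) else 0) (fact j / a ^ (j + 1))"
proof (rule has_bochner_integral_nn_integral)
  have "(\<integral>\<^sup>+t. ennreal (if 0 < t then t ^ j * exp (-a * t) else 0) \<partial>lborel)
      = (\<integral>\<^sup>+t. ennreal (fact j / a ^ (j + 1)) * ennreal (erlang_density j a t) \<partial>lborel)"
    using assms
    by (intro nn_integral_cong_AE eventually_mono[OF AE_lborel_singleton[of 0]])
       (auto simp: erlang_density_def ennreal_mult[symmetric])
  also have "\<dots> = ennreal (fact j / a ^ (j + 1)) * (\<integral>\<^sup>+t. ennreal (erlang_density j a t) \<partial>lborel)"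
    by (rule nn_integral_cmult) measurable
  also have "(\<integral>\<^sup>+t. ennreal (erlang_density j a t) \<partial>lborel) = 1"
    using nn_integral_erlang_ith_moment[OF assms, of j 0] by simp
  finally show "(\<integral>\<^sup>+t. ennreal (if 0 < t then t ^ j * exp (-a * t) else 0) \<partial>lborel) = ennreal (fact j / a ^ (j + 1))"
    by simp
qed (use assms in auto)

lemma has_bochner_integral_power_times_exp_series:
  fixes a c :: "nat \<Rightarrow> real" and F :: "real \<Rightarrow> real"
  assumes a: "\<And>k. 0 < a k" and c: "\<And>k. 0 \<le> c k"
    and F_sums: "\<And>t. 0 < t \<Longrightarrow> (\<lambda>k. c k * exp (-a k * t)) sums F t"
    and moments_summable: "summable (\<lambda>k. c k * (fact j / a k ^ (j + 1)))"
  shows "has_bochner_integral lborel (\<lambda>t. if 0 < t then t ^ j * F t else 0)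
           (\<Sum>k. c k * (fact j / a k ^ (j + 1)))"
proof -
  define f where "f k t = c k * (if 0 < t then t ^ j * exp (-a k * t) else 0)" for k t
  have f_integral: "has_bochner_integral lborel (f k) (c k * (fact j / a k ^ (j + 1)))" for k
    unfolding f_def by (intro has_bochner_integral_mult_right has_bochner_integral_power_times_exp a)
  have norm_f: "norm (f k t) = f k t" for k t
    using c[of k] by (simp add: f_def)
  have f_sums: "(\<lambda>k. f k t) sums (if 0 < t then t ^ j * F t else 0)" for t
  proof (cases "0 < t")
    case True
    then show ?thesis
      using sums_mult[OF F_sums[OF True], of "t ^ j"] by (simp add: f_def ac_simps)
  qed (simp add: f_def)
  have f_integrable: "integrable lborel (f k)" for k
    using f_integral by (simp add: has_bochner_integral_iff)
  have "AE t in lborel. summable (\<lambda>k. norm (f k t))"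
    using f_sums unfolding norm_f by (simp add: sums_iff)
  moreover have "summable (\<lambda>k. \<integral>t. norm (f k t) \<partial>lborel)"
    using f_integral moments_summable unfolding norm_f by (simp add: has_bochner_integral_iff)
  ultimately have "integrable lborel (\<lambda>t. \<Sum>k. f k t)"
    and "(\<lambda>k. integral\<^sup>L lborel (f k)) sums (\<integral>t. (\<Sum>k. f k t) \<partial>lborel)"
    using integrable_suminf sums_integral f_integrable by blast+
  moreover have "(\<lambda>t. \<Sum>k. f k t) = (\<lambda>t. if 0 < t then t ^ j * F t else 0)"
    using f_sums by (simp add: sums_iff)
  ultimately show ?thesis
    using f_integral by (simp add: has_bochner_integral_iff sums_iff)
qed

definition wzeta :: "real \<Rightarrow> nat \<Rightarrow> real" where
  "wzeta x s = (\<Sum>k. (real k + 1) / (x + real k) ^ s)"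

lemma wzeta_summable:
  assumes "0 < x" "3 \<le> s"
  shows "summable (\<lambda>k. (real k + 1) / (x + real k) ^ s)"
proof (rule summable_comparison_test')
  show "summable (\<lambda>k. 2 * inverse (real k ^ 2))"
    by (intro summable_mult inverse_power_summable) simp
next
  fix k :: nat
  assume "1 \<le> k"
  then have k: "1 \<le> real k"
    by simp
  have "real k ^ 3 \<le> real k ^ s"
    using power_increasing[OF \<open>3 \<le> s\<close> k] .
  also have "\<dots> \<le> (x + real k) ^ s"
    using \<open>0 < x\<close> by (intro power_mono) auto
  finally have "(real k + 1) / (x + real k) ^ s \<le> (2 * real k) / real k ^ 3"
    using k by (intro frac_le) auto
  also have "\<dots> = 2 * inverse (real k ^ 2)"
    using k by (simp add: field_simps eval_nat_numeral)
  finally show "norm ((real k + 1) / (x + real k) ^ s) \<le> 2 * inverse (real k ^ 2)"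
    using \<open>0 < x\<close> by simp
qed

lemma wzeta_sums: "0 < x \<Longrightarrow> 3 \<le> s \<Longrightarrow> (\<lambda>k. (real k + 1) / (x + real k) ^ s) sums wzeta x s"
  unfolding wzeta_def by (intro summable_sums wzeta_summable)

lemma wzeta_pos: "0 < x \<Longrightarrow> 3 \<le> s \<Longrightarrow> 0 < wzeta x s"
  unfolding wzeta_def by (rule suminf_pos2[OF wzeta_summable, of _ _ 0]) auto

lemma has_bochner_integral_expsum0:
  assumes "0 < x" "2 \<le> j"
  shows "has_bochner_integral lborel (\<lambda>t. if 0 < t then t ^ j * expsum0 x t else 0) (fact j * wzeta x (j + 1))"
proof -
  have "(\<lambda>k. (real k + 1) * (fact j / (x + real k) ^ (j + 1))) sums (fact j * wzeta x (j + 1))"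
    using sums_mult[OF wzeta_sums[of x "j + 1"], of "fact j"] assms by (simp add: ac_simps)
  then show ?thesis
    using has_bochner_integral_power_times_exp_series[of "\<lambda>k. x + real k" "\<lambda>k. real k + 1" "expsum0 x" j]
      assms expsum0_sums by (simp add: sums_iff)
qed

lemma has_bochner_integral_expsum1:
  assumes "0 < x" "3 \<le> j"
  shows "has_bochner_integral lborel (\<lambda>t. if 0 < t then t ^ j * expsum1 x t else 0) (fact j * wzeta x j)"
proof -
  have "b * y * (f / y ^ (j + 1)) = f * (b / y ^ j)" if "y \<noteq> 0" for b y f :: real
    using that by (simp add: field_simps)
  then have "(real k + 1) * (x + real k) * (fact j / (x + real k) ^ (j + 1)) = fact j * ((real k + 1) / (x + real k) ^ j)" for k
    using \<open>0 < x\<close> by (metis add_pos_nonneg of_nat_0_le_iff order_less_irrefl)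
  then have "(\<lambda>k. (real k + 1) * (x + real k) * (fact j / (x + real k) ^ (j + 1))) sums (fact j * wzeta x j)"
    using sums_mult[OF wzeta_sums[OF assms], of "fact j"] by simp
  then show ?thesis
    using has_bochner_integral_power_times_exp_series[of "\<lambda>k. x + real k" "\<lambda>k. (real k + 1) * (x + real k)" "expsum1 x" j]
      assms expsum1_sums by (simp add: sums_iff)
qed

lemma sums_Cauchy_Schwarz_strict:
  fixes w u :: "nat \<Rightarrow> real"
  assumes w: "\<And>k. 0 \<le> w k"
    and A0: "w sums A0" and A1: "(\<lambda>k. w k * u k) sums A1" and A2: "(\<lambda>k. w k * u k ^ 2) sums A2"
    and "0 < w i" "0 < w j" "u i \<noteq> u j"
  shows "A1 ^ 2 < A0 * A2"
proof -
  have "0 < A0"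
    using suminf_pos2[OF sums_summable[OF A0] w \<open>0 < w i\<close>] A0 by (simp add: sums_iff)
  define \<mu> where "\<mu> = A1 / A0"
  have "(\<lambda>k. w k * u k ^ 2 - 2 * \<mu> * (w k * u k) + \<mu> ^ 2 * w k) sums (A2 - 2 * \<mu> * A1 + \<mu> ^ 2 * A0)"
    by (intro sums_add sums_diff sums_mult A0 A1 A2)
  then have var_sums: "(\<lambda>k. w k * (u k - \<mu>) ^ 2) sums (A2 - 2 * \<mu> * A1 + \<mu> ^ 2 * A0)"
    by (simp add: power2_eq_square algebra_simps)
  obtain l where "0 < w l" "u l \<noteq> \<mu>"
    using \<open>0 < w i\<close> \<open>0 < w j\<close> \<open>u i \<noteq> u j\<close> by metis
  then have "0 < A2 - 2 * \<mu> * A1 + \<mu> ^ 2 * A0"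
    using suminf_pos2[OF sums_summable[OF var_sums], of l] var_sums w by (simp add: sums_iff)
  also have "A2 - 2 * \<mu> * A1 + \<mu> ^ 2 * A0 = (A0 * A2 - A1 ^ 2) / A0"
    using \<open>0 < A0\<close> by (simp add: \<mu>_def field_simps power2_eq_square)
  finally show ?thesis
    using \<open>0 < A0\<close> by (simp add: zero_less_divide_iff)
qed

lemma wzeta_log_convex:
  assumes "0 < x" "3 \<le> n"
  shows "wzeta x (n + 1) ^ 2 < wzeta x n * wzeta x (n + 2)"
proof (rule sums_Cauchy_Schwarz_strict)
  show "(\<lambda>k. (real k + 1) / (x + real k) ^ n) sums wzeta x n"
    using assms by (rule wzeta_sums)
  show "(\<lambda>k. (real k + 1) / (x + real k) ^ n * (1 / (x + real k))) sums wzeta x (n + 1)"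
    using wzeta_sums[of x "n + 1"] assms by (simp add: mult.commute)
  show "(\<lambda>k. (real k + 1) / (x + real k) ^ n * (1 / (x + real k)) ^ 2) sums wzeta x (n + 2)"
    using wzeta_sums[of x "n + 2"] assms by (simp add: power2_eq_square ac_simps)
  show "1 / (x + real 0) \<noteq> 1 / (x + real 1)"
    by simp
qed (use assms in auto)

lemma has_bochner_integral_pos:
  fixes f :: "real \<Rightarrow> real"
  assumes f: "has_bochner_integral lborel f I" and nonneg: "\<And>t. 0 \<le> f t"
    and "a < b" and pos: "\<And>t. a < t \<Longrightarrow> t < b \<Longrightarrow> 0 < f t"
  shows "0 < I"
proof -
  have "integrable lborel f" "integral\<^sup>L lborel f = I"
    using f by (simp_all add: has_bochner_integral_iff)
  have "I \<noteq> 0"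
  proof
    assume "I = 0"
    then have "AE t in lborel. f t = 0"
      using integral_nonneg_eq_0_iff_AE[of lborel f] \<open>integrable lborel f\<close> \<open>integral\<^sup>L lborel f = I\<close> nonneg
      by simp
    then have "AE t in lborel. t \<notin> {a<..<b}"
      by eventually_elim (use pos in fastforce)
    then have "emeasure lborel {a<..<b} = 0"
      by (subst (asm) AE_iff_measurable[of "{a<..<b}"]) auto
    with \<open>a < b\<close> show False
      by simp
  qed
  moreover have "0 \<le> I"
    using \<open>integral\<^sup>L lborel f = I\<close> nonneg by (metis AE_I2 integral_nonneg_AE)
  ultimately show ?thesis
    by simp
qed

lemma expsum_phi_identity:
  assumes "0 < t"
  shows "t * expsum1 x t - (2 * phi \<tau> + x - 2) * t * expsum0 x t - 2 * expsum0 x t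
           = 2 * t * expsum0 x t * (phi t - phi \<tau>)"
  using assms by (simp add: expsum1_def phi_def field_simps)

(* The right-hand side is the integral of 2 (t - \<tau>) t^n expsum0 x t (phi t - phi \<tau>) over t > 0. *)
lemma wzeta_moment_combination_pos:
  assumes "0 < x" "3 \<le> n" "0 < \<tau>"
  defines "c \<equiv> 2 * phi \<tau> + x - 2"
  shows "0 < fact (n + 1) * wzeta x (n + 1) - \<tau> * fact n * wzeta x n
           - c * (fact (n + 1) * wzeta x (n + 2) - \<tau> * fact n * wzeta x (n + 1))
           - 2 * (fact n * wzeta x (n + 1) - \<tau> * fact (n - 1) * wzeta x n)"
    (is "0 < ?V")
proof -
  define M0 where "M0 j t = (if 0 < t then t ^ j * expsum0 x t else 0)" for j t
  define M1 where "M1 j t = (if 0 < t then t ^ j * expsum1 x t else 0)" for j t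
  define P where "P t = M1 (n + 1) t - \<tau> * M1 n t - c * (M0 (n + 1) t - \<tau> * M0 n t)
                        - 2 * (M0 n t - \<tau> * M0 (n - 1) t)" for t
  have M0_integral: "has_bochner_integral lborel (M0 j) (fact j * wzeta x (j + 1))" if "2 \<le> j" for j
    unfolding M0_def using \<open>0 < x\<close> that by (rule has_bochner_integral_expsum0)
  have M1_integral: "has_bochner_integral lborel (M1 j) (fact j * wzeta x j)" if "3 \<le> j" for j
    unfolding M1_def using \<open>0 < x\<close> that by (rule has_bochner_integral_expsum1)
  have "has_bochner_integral lborel P
     (fact (n + 1) * wzeta x (n + 1) - \<tau> * (fact n * wzeta x n)
       - c * (fact (n + 1) * wzeta x (n + 1 + 1) - \<tau> * (fact n * wzeta x (n + 1)))
       - 2 * (fact n * wzeta x (n + 1) - \<tau> * (fact (n - 1) * wzeta x (n - 1 + 1))))"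
    unfolding P_def using \<open>3 \<le> n\<close>
    by (intro has_bochner_integral_diff has_bochner_integral_mult_right M0_integral M1_integral) auto
  then have P_integral: "has_bochner_integral lborel P ?V"
    using \<open>3 \<le> n\<close> by (simp add: mult.assoc)
  have P_eq: "P t = (if 0 < t then 2 * (t ^ n * expsum0 x t) * ((t - \<tau>) * (phi t - phi \<tau>)) else 0)" for t
  proof (cases "0 < t")
    case True
    obtain m where "n = Suc m"
      using \<open>3 \<le> n\<close> by (cases n) auto
    then have "P t = (t - \<tau>) * t ^ m * (t * expsum1 x t - c * t * expsum0 x t - 2 * expsum0 x t)"
      using True by (simp add: P_def M0_def M1_def algebra_simps)
    also have "\<dots> = (t - \<tau>) * t ^ m * (2 * t * expsum0 x t * (phi t - phi \<tau>))"
      unfolding c_def expsum_phi_identity[OF True] ..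
    finally show ?thesis
      using True \<open>n = Suc m\<close> by (simp add: algebra_simps)
  qed (simp add: P_def M0_def M1_def)
  have expsum0_pos: "0 < t \<Longrightarrow> 0 < t ^ n * expsum0 x t" for t
    by (simp add: expsum0_def)
  show ?thesis
  proof (rule has_bochner_integral_pos[OF P_integral])
    show "0 \<le> P t" for t
    proof (cases "0 < t")
      case True
      have "0 \<le> (t - \<tau>) * (phi t - phi \<tau>)"
        using phi_less[OF True, of \<tau>] phi_less[OF \<open>0 < \<tau>\<close>, of t]
        by (cases t \<tau> rule: linorder_cases) (auto simp: mult_nonpos_nonpos)
      then show ?thesis
        using expsum0_pos[OF True] True by (simp add: P_eq)
    qed (simp add: P_eq)
    show "0 < P t" if "\<tau> < t" "t < \<tau> + 1" for t
      using that \<open>0 < \<tau>\<close> phi_less[OF \<open>0 < \<tau>\<close> \<open>\<tau> < t\<close>] expsum0_pos[of t] by (simp add: P_eq)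
  qed simp
qed

lemma wzeta_log_convex_reverse:
  assumes "0 < x" "3 \<le> n"
  shows "(real n + 1) * (real n - 2) * (wzeta x n * wzeta x (n + 2)) < real n * (real n - 1) * wzeta x (n + 1) ^ 2"
proof -
  define S0 S1 S2 where "S0 = wzeta x n" and "S1 = wzeta x (n + 1)" and "S2 = wzeta x (n + 2)"
  have "0 < S0" "0 < S1" "0 < S2"
    using assms by (simp_all add: S0_def S1_def S2_def wzeta_pos)
  \<comment> \<open>makes the coefficient of \<open>phi \<tau>\<close> vanish\<close>
  define \<tau> where "\<tau> = (real n + 1) * S2 / S1"
  have "0 < \<tau>"
    using \<open>0 < S1\<close> \<open>0 < S2\<close> by (simp add: \<tau>_def)
  have \<tau>_S1: "\<tau> * S1 = (real n + 1) * S2"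
    using \<open>0 < S1\<close> by (simp add: \<tau>_def)
  define f where "f = (fact (n - 1) :: real)"
  have "0 < f"
    by (simp add: f_def)
  have fact_n: "fact n = real n * f" and fact_Suc_n: "fact (n + 1) = (real n + 1) * (real n * f)"
    using \<open>3 \<le> n\<close> by (simp_all add: f_def fact_reduce)
  have "fact (n + 1) * S2 - \<tau> * fact n * S1 = real n * f * ((real n + 1) * S2 - \<tau> * S1)"
    by (simp add: fact_n fact_Suc_n algebra_simps)
  then have phi_term: "fact (n + 1) * S2 - \<tau> * fact n * S1 = 0"
    using \<tau>_S1 by simp
  have "0 < fact (n + 1) * S1 - \<tau> * fact n * S0 - 2 * (fact n * S1 - \<tau> * f * S0)"
    using wzeta_moment_combination_pos[OF assms \<open>0 < \<tau>\<close>]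
    unfolding S0_def[symmetric] S1_def[symmetric] S2_def[symmetric] f_def[symmetric] phi_term
    by simp
  also have "\<dots> = f * (real n * (real n - 1) * S1 - \<tau> * (real n - 2) * S0)"
    by (simp add: fact_n fact_Suc_n algebra_simps)
  finally have "0 < (real n * (real n - 1) * S1 - \<tau> * (real n - 2) * S0) * S1"
    using \<open>0 < f\<close> \<open>0 < S1\<close> by (simp add: zero_less_mult_iff)
  also have "\<dots> = real n * (real n - 1) * S1 ^ 2 - (real n - 2) * S0 * (\<tau> * S1)"
    by (simp add: power2_eq_square algebra_simps)
  also have "\<dots> = real n * (real n - 1) * S1 ^ 2 - (real n + 1) * (real n - 2) * (S0 * S2)"
    unfolding \<tau>_S1 by (simp add: algebra_simps)
  finally show ?thesis
    by (simp add: S0_def S1_def S2_def)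
qed

theorem corollary3p4:
  fixes n :: nat and x :: real
  assumes "n \<ge> 3" and "x > 0"
  shows "(\<Sum>k. (real k + 1) / (x + real k) ^ (n + 1)) ^ 2
           < (\<Sum>k. (real k + 1) / (x + real k) ^ n) * (\<Sum>k. (real k + 1) / (x + real k) ^ (n + 2))
         \<and> (\<Sum>k. (real k + 1) / (x + real k) ^ (n + 1)) ^ 2
           > (real n ^ 2 - real n - 2) / (real n ^ 2 - real n) *
             ((\<Sum>k. (real k + 1) / (x + real k) ^ n) * (\<Sum>k. (real k + 1) / (x + real k) ^ (n + 2)))"
proof -
  have "0 < real n ^ 2 - real n"
    using assms(1) by (simp add: power2_eq_square)
  moreover have "(real n ^ 2 - real n - 2) * (wzeta x n * wzeta x (n + 2)) < (real n ^ 2 - real n) * wzeta x (n + 1) ^ 2"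
    using wzeta_log_convex_reverse[OF assms(2,1)] by (simp add: power2_eq_square algebra_simps)
  ultimately show ?thesis
    using wzeta_log_convex[OF assms(2,1)] by (simp add: wzeta_def pos_divide_less_eq ac_simps)
qed

end
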